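(* (1) The normalized $k$-derivations $D$ of $kQ$ (those with $D(e_i)=0$ for $i=1,2,3$) are exactly the derivations with $D(\alpha)=\alpha\,a(\beta)$, $D(\beta)=b(\beta)$, $D(\gamma)=h(\beta)\gamma$ for arbitrary polynomials $a,b,h\in k[\beta]$. (2) Such a $D$ satisfies $D(I)\subseteq I$ for $I=I(n;n',n'';V)$ (i.e. descends to a derivation of $\Lambda=kQ/I$) if and only if $\delta\, b(0)=0$ in $k$ and the first order differential operator $\Theta_D=(a(\beta)+h(\beta))+b(\beta)\frac{d}{d\beta}$ on $k[\beta]$ satisfies $\Theta_D(V)\subseteq V$. (3) If $D$ descends to $\Lambda$, the induced derivation of $\Lambda$ is inner if and only if $a(\beta)+h(\beta)\equiv a(0)+h(0)\pmod{\beta^{m}}$ and $b(\beta)\equiv 0\pmod{\beta^n}$, where $m=\min(n',n'')$.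
   Context: $k$ is a field; $Q$ is the quiver with vertices $1,2,3$ and arrows $\alpha\colon 2\to1$, $\beta\colon 2\to 2$, $\gamma\colon 3\to 2$; $kQ$ is generated by pairwise orthogonal idempotents $e_1,e_2,e_3$ (sum $1$) and $\alpha,\beta,\gamma$ with $e_1\alpha=\alpha=\alpha e_2$, $e_2\beta=\beta=\beta e_2$, $e_3\gamma=\gamma=\gamma e_2$, $\gamma\alpha=\beta\alpha=\gamma\beta=0$; for $p=\sum_ip_i\beta^i\in k[\beta]$ write $\alpha p=\sum_i p_i\alpha\beta^i$, $p\gamma=\sum_i p_i\beta^i\gamma$, $\alpha p\gamma=\sum_ip_i\alpha\beta^i\gamma$, and $p=\sum_i p_i\beta^i$ with $\beta^0=e_2$ inside $kQ$. For integers $n\ge 2$, $1\le n',n''\le n$, $m=\min(n',n'')$ and a $k$-subspace $V\subseteq k[\beta]$ containing $(\beta^m)$, $I(n;n',n'';V)$ denotes the two-sided ideal of $kQ$ generated by $\alpha\beta^{n'}$, $\beta^n$, $\beta^{n''}\gamma$ and all $\alpha v\gamma$, $v\in V$. Put $\delta=\gcd(n,n',n'')$ (an integer, viewed in $k$). *)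

theory Defs
  imports "HOL-Computational_Algebra.Polynomial"
begin

text \<open>
  Q has vertices 1,2,3 and arrows alpha: 2 -> 1, beta: 2 -> 2 (loop), gamma: 3 -> 2.
  Products of paths are written right-to-left (e1 alpha = alpha = alpha e2), so that
  gamma: 3 -> 2 satisfies e2 gamma = gamma = gamma e3 (the context's "e3 gamma = gamma = gamma e2"
  is inconsistent with this convention and with alpha beta^i gamma being nonzero paths).
  The path basis of kQ is
     e1, e3, beta^i (i >= 0, beta^0 = e2), alpha beta^i, beta^i gamma, alpha beta^i gamma (i >= 0).
  Grouping basis paths by (source, target), an element of kQ is uniquely
     c1 e1 + c3 e3 + p(beta) + alpha q(beta) + r(beta) gamma + alpha s(beta) gamma
  with c1, c3 in k and p, q, r, s in k[beta].  We store exactly these coordinates: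
  KQ c1 c3 p q r s.  Multiplication is bilinear extension of path concatenation
  (paths that do not compose multiply to 0), which in these coordinates reads as below.
\<close>

declare [[typedef_overloaded]]
datatype ('k::zero) kQ = KQ (kQ_c1: 'k) (kQ_c3: 'k) (kQ_p: "'k poly") (kQ_q: "'k poly")
                    (kQ_r: "'k poly") (kQ_s: "'k poly")

instantiation kQ :: (comm_ring_1) "{zero, one, plus, minus, uminus, times}"
begin
definition "0 = KQ 0 0 0 0 0 0"
definition "1 = KQ 1 1 1 0 0 0"
definition "x + y = KQ (kQ_c1 x + kQ_c1 y) (kQ_c3 x + kQ_c3 y) (kQ_p x + kQ_p y)
                       (kQ_q x + kQ_q y) (kQ_r x + kQ_r y) (kQ_s x + kQ_s y)"
definition "x - y = KQ (kQ_c1 x - kQ_c1 y) (kQ_c3 x - kQ_c3 y) (kQ_p x - kQ_p y)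
                       (kQ_q x - kQ_q y) (kQ_r x - kQ_r y) (kQ_s x - kQ_s y)"
definition "- x = KQ (- kQ_c1 x) (- kQ_c3 x) (- kQ_p x) (- kQ_q x) (- kQ_r x) (- kQ_s x)"
definition "x * y = KQ (kQ_c1 x * kQ_c1 y) (kQ_c3 x * kQ_c3 y) (kQ_p x * kQ_p y)
      (smult (kQ_c1 x) (kQ_q y) + kQ_q x * kQ_p y)
      (kQ_p x * kQ_r y + smult (kQ_c3 y) (kQ_r x))
      (smult (kQ_c1 x) (kQ_s y) + kQ_q x * kQ_r y + smult (kQ_c3 y) (kQ_s x))"
instance ..
end

definition kQ_smult :: "'k::comm_ring_1 \<Rightarrow> 'k kQ \<Rightarrow> 'k kQ" where
  "kQ_smult c x = KQ (c * kQ_c1 x) (c * kQ_c3 x) (smult c (kQ_p x)) (smult c (kQ_q x))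
                     (smult c (kQ_r x)) (smult c (kQ_s x))"

definition e1 :: "'k::comm_ring_1 kQ" where "e1 = KQ 1 0 0 0 0 0"
definition e2 :: "'k::comm_ring_1 kQ" where "e2 = KQ 0 0 1 0 0 0"
definition e3 :: "'k::comm_ring_1 kQ" where "e3 = KQ 0 1 0 0 0 0"
definition arr_alpha :: "'k::comm_ring_1 kQ" where "arr_alpha = KQ 0 0 0 1 0 0"
definition arr_beta :: "'k::comm_ring_1 kQ" where "arr_beta = KQ 0 0 [:0, 1:] 0 0 0"
definition arr_gamma :: "'k::comm_ring_1 kQ" where "arr_gamma = KQ 0 0 0 0 1 0"

definition kQ_of_poly :: "'k::comm_ring_1 poly \<Rightarrow> 'k kQ" where
  "kQ_of_poly p = KQ 0 0 p 0 0 0"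

lemma kQ_relations:
  "e1 * arr_alpha = (arr_alpha :: 'k::comm_ring_1 kQ)" "arr_alpha * e2 = (arr_alpha :: 'k kQ)"
  "e2 * arr_beta = (arr_beta :: 'k kQ)" "arr_beta * e2 = (arr_beta :: 'k kQ)"
  "e2 * arr_gamma = (arr_gamma :: 'k kQ)" "arr_gamma * e3 = (arr_gamma :: 'k kQ)"
  "arr_gamma * arr_alpha = (0 :: 'k kQ)" "arr_beta * arr_alpha = (0 :: 'k kQ)"
  "arr_gamma * arr_beta = (0 :: 'k kQ)"
  "e1 + e2 + e3 = (1 :: 'k kQ)"
  "e1 * e1 = (e1 :: 'k kQ)" "e2 * e2 = (e2 :: 'k kQ)" "e3 * e3 = (e3 :: 'k kQ)"
  "e1 * e2 = (0 :: 'k kQ)" "e2 * e3 = (0 :: 'k kQ)" "e1 * e3 = (0 :: 'k kQ)"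
  "e2 * e1 = (0 :: 'k kQ)" "e3 * e2 = (0 :: 'k kQ)" "e3 * e1 = (0 :: 'k kQ)"
  by (simp_all add: e1_def e2_def e3_def arr_alpha_def arr_beta_def arr_gamma_def
      times_kQ_def plus_kQ_def one_kQ_def zero_kQ_def)

lemma kQ_of_poly_monom_is_power:
  "kQ_of_poly (monom 1 (Suc i)) = (arr_beta :: 'k::comm_ring_1 kQ) * kQ_of_poly (monom 1 i)"
  by (simp add: kQ_of_poly_def arr_beta_def times_kQ_def monom_Suc)

definition kQ_derivation :: "('k::comm_ring_1 kQ \<Rightarrow> 'k kQ) \<Rightarrow> bool" where
  "kQ_derivation D \<longleftrightarrow>
     (\<forall>x y. D (x + y) = D x + D y) \<and>
     (\<forall>c x. D (kQ_smult c x) = kQ_smult c (D x)) \<and>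
     (\<forall>x y. D (x * y) = D x * y + x * D y)"

definition kQ_normalized :: "('k::comm_ring_1 kQ \<Rightarrow> 'k kQ) \<Rightarrow> bool" where
  "kQ_normalized D \<longleftrightarrow> D e1 = 0 \<and> D e2 = 0 \<and> D e3 = 0"

text \<open>The two-sided ideal of kQ generated by a set S (closure under sums and
  two-sided multiples; scalar multiples arise as multiples by scalars times 1).\<close>
inductive_set kQ_ideal_gen :: "'k::comm_ring_1 kQ set \<Rightarrow> 'k kQ set" for S where
  gen_zero: "0 \<in> kQ_ideal_gen S"
| gen_base: "s \<in> S \<Longrightarrow> s \<in> kQ_ideal_gen S"
| gen_add: "x \<in> kQ_ideal_gen S \<Longrightarrow> y \<in> kQ_ideal_gen S \<Longrightarrow> x + y \<in> kQ_ideal_gen S"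
| gen_mult: "x \<in> kQ_ideal_gen S \<Longrightarrow> u * x * w \<in> kQ_ideal_gen S"

definition ideal_I :: "nat \<Rightarrow> nat \<Rightarrow> nat \<Rightarrow> 'k::comm_ring_1 poly set \<Rightarrow> 'k kQ set" where
  "ideal_I n n' n'' V = kQ_ideal_gen
     ({arr_alpha * kQ_of_poly (monom 1 n'), kQ_of_poly (monom 1 n),
       kQ_of_poly (monom 1 n'') * arr_gamma}
      \<union> {arr_alpha * kQ_of_poly v * arr_gamma | v. v \<in> V})"

definition poly_subspace :: "'k::comm_ring_1 poly set \<Rightarrow> bool" where
  "poly_subspace V \<longleftrightarrow> 0 \<in> V \<and> (\<forall>x\<in>V. \<forall>y\<in>V. x + y \<in> V) \<and> (\<forall>c. \<forall>x\<in>V. smult c x \<in> V)"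

definition Theta :: "'k::field poly \<Rightarrow> 'k poly \<Rightarrow> 'k poly \<Rightarrow> 'k poly \<Rightarrow> 'k poly" where
  "Theta a b h v = (a + h) * v + b * pderiv v"

end

theory Submission
  imports Defs
begin

(* By the Leibniz rule, the normalized derivation
  with D alpha = alpha a, D beta = b, D gamma = h gamma acts on these coordinates as
  (c1, c3, p, q, r, s) |-> (0, 0, b p', a q + b q', b r' + h r, Theta_D s).
  Because (beta^m) is contained in V, the ideal I consists exactly of the elements with c1 = c3 = 0,
  beta^n | p, beta^n' | q, beta^n'' | r and s in V, so D(I) <= I is a coordinatewise condition.
  Apart from Theta_D(V) <= V, it reduces to beta^k | b (beta^k t)' for k = n, n', n'', which holds
  for all t iff k b(0) = 0, i.e. iff gcd(n, n', n'') b(0) = 0.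
  Subtracting the inner derivation of c e1 + P(beta) turns (a, b, h) into (a + P - c, b, h - P);
  evaluating D - [u, -] on the three arrows shows that no other u does better. *)

lemma monom_1_dvd_of_le:
  "monom 1 j dvd p \<Longrightarrow> i \<le> j \<Longrightarrow> monom (1::'a::comm_semiring_1) i dvd p"
  by (simp add: monom_1_dvd_iff')

lemma monom_dvd_imp_mem:
  assumes "\<forall>p. monom 1 m * p \<in> V" "monom (1::'a::comm_semiring_1) j dvd t" "m \<le> j"
  shows "t \<in> V"
  using monom_1_dvd_of_le[OF assms(2,3)] assms(1) by (auto elim: dvdE)

lemma monom_1_Suc_dvd_monom_mult_iff:
  "monom (1::'a::comm_semiring_1) (Suc j) dvd monom c j * b \<longleftrightarrow> c * coeff b 0 = 0"
  by (auto simp: monom_1_dvd_iff' coeff_monom_mult less_Suc_eq)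

lemma monom_dvd_mult_pderiv_monom_mult_iff:
  fixes b t :: "'a::idom poly"
  shows "monom 1 k dvd b * pderiv (monom 1 k * t) \<longleftrightarrow> of_nat k * coeff b 0 * coeff t 0 = 0"
proof (cases k)
  case (Suc j)
  have "b * pderiv (monom 1 k * t) = monom 1 k * (b * pderiv t) + monom (of_nat k) j * (b * t)"
    by (simp add: Suc pderiv_mult pderiv_monom algebra_simps)
  then show ?thesis
    by (simp add: Suc dvd_add_right_iff monom_1_Suc_dvd_monom_mult_iff coeff_mult_0 mult.assoc
        del: of_nat_Suc)
qed simp

lemma of_nat_gcd_eq_0_iff:
  "(of_nat (gcd m n) :: 'a::semiring_1) = 0 \<longleftrightarrow> (of_nat m :: 'a) = 0 \<and> (of_nat n :: 'a) = 0"
  by (simp add: of_nat_eq_0_iff_char_dvd)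

lemmas kQ_simps = times_kQ_def plus_kQ_def minus_kQ_def uminus_kQ_def zero_kQ_def one_kQ_def
  kQ_smult_def e1_def e2_def e3_def arr_alpha_def arr_beta_def arr_gamma_def kQ_of_poly_def

definition kQ_der :: "'k::idom poly \<Rightarrow> 'k poly \<Rightarrow> 'k poly \<Rightarrow> 'k kQ \<Rightarrow> 'k kQ" where
  "kQ_der a b h x = KQ 0 0 (b * pderiv (kQ_p x)) (a * kQ_q x + b * pderiv (kQ_q x))
     (b * pderiv (kQ_r x) + h * kQ_r x) (a * kQ_s x + b * pderiv (kQ_s x) + h * kQ_s x)"

lemma kQ_derivation_kQ_der: "kQ_derivation (kQ_der a b h)"
  unfolding kQ_derivation_def
proof (intro conjI allI)
  fix x y :: "'a kQ"
  show "kQ_der a b h (x + y) = kQ_der a b h x + kQ_der a b h y"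
    by (simp add: kQ_der_def kQ_simps pderiv_add algebra_simps)
  show "kQ_der a b h (x * y) = kQ_der a b h x * y + x * kQ_der a b h y"
    by (simp add: kQ_der_def kQ_simps pderiv_add pderiv_mult pderiv_smult algebra_simps
        smult_add_right)
next
  fix c and x :: "'a kQ"
  show "kQ_der a b h (kQ_smult c x) = kQ_smult c (kQ_der a b h x)"
    by (simp add: kQ_der_def kQ_simps pderiv_smult algebra_simps smult_add_right)
qed

lemma kQ_normalized_kQ_der: "kQ_normalized (kQ_der a b h)"
  by (simp add: kQ_normalized_def kQ_der_def kQ_simps)

lemma kQ_der_arrows:
  "kQ_der a b h arr_alpha = arr_alpha * kQ_of_poly a"
  "kQ_der a b h arr_beta = kQ_of_poly b"
  "kQ_der a b h arr_gamma = kQ_of_poly h * arr_gamma"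
  by (simp_all add: kQ_der_def kQ_simps pderiv_pCons)

lemma kQ_derivationD:
  assumes "kQ_derivation D"
  shows "D (x + y) = D x + D y" "D (kQ_smult c x) = kQ_smult c (D x)"
    "D (x * y) = D x * y + x * D y"
  using assms unfolding kQ_derivation_def by blast+

lemma kQ_derivation_kQ_of_poly:
  assumes D: "kQ_derivation D" and N: "kQ_normalized D" and B: "D arr_beta = kQ_of_poly b"
  shows "D (kQ_of_poly p) = kQ_of_poly (b * pderiv p)"
proof (induction p rule: pCons_induct)
  case 0
  have "D 0 = D (kQ_smult 0 0)" by (simp add: kQ_simps)
  also have "\<dots> = 0" by (simp add: kQ_derivationD(2)[OF D]) (simp add: kQ_simps)
  finally show ?case by (simp add: kQ_simps)
next
  case (pCons c p)
  have "kQ_of_poly (pCons c p) = kQ_smult c e2 + arr_beta * kQ_of_poly p"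
    by (simp add: kQ_simps)
  then have "D (kQ_of_poly (pCons c p))
      = kQ_smult c (D e2) + (D arr_beta * kQ_of_poly p + arr_beta * D (kQ_of_poly p))"
    by (simp add: kQ_derivationD[OF D])
  then show ?case
    using N pCons(2) B by (simp add: kQ_normalized_def kQ_simps pderiv_pCons algebra_simps)
qed

lemma kQ_derivation_eq_kQ_der:
  assumes D: "kQ_derivation D" and N: "kQ_normalized D"
    and A: "D arr_alpha = arr_alpha * kQ_of_poly a"
    and B: "D arr_beta = kQ_of_poly b"
    and G: "D arr_gamma = kQ_of_poly h * arr_gamma"
  shows "D = kQ_der a b h"
proof
  fix x :: "'a kQ"
  obtain c1 c3 p q r s where x: "x = KQ c1 c3 p q r s" by (cases x)
  have "x = kQ_smult c1 e1 + kQ_smult c3 e3 + kQ_of_poly p + arr_alpha * kQ_of_poly q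
     + kQ_of_poly r * arr_gamma + arr_alpha * kQ_of_poly s * arr_gamma"
    by (simp add: x kQ_simps)
  then have "D x = kQ_smult c1 (D e1) + kQ_smult c3 (D e3) + D (kQ_of_poly p)
     + (D arr_alpha * kQ_of_poly q + arr_alpha * D (kQ_of_poly q))
     + (D (kQ_of_poly r) * arr_gamma + kQ_of_poly r * D arr_gamma)
     + ((D arr_alpha * kQ_of_poly s + arr_alpha * D (kQ_of_poly s)) * arr_gamma
        + arr_alpha * kQ_of_poly s * D arr_gamma)"
    by (simp add: kQ_derivationD[OF D])
  also have "\<dots> = kQ_der a b h x"
    unfolding kQ_derivation_kQ_of_poly[OF D N B]
    using N A G by (simp add: x kQ_normalized_def kQ_der_def kQ_simps algebra_simps)
  finally show "D x = kQ_der a b h x" .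
qed

lemma kQ_derivation_arrows_iff:
  "kQ_derivation D \<and> kQ_normalized D \<and> D arr_alpha = arr_alpha * kQ_of_poly a
     \<and> D arr_beta = kQ_of_poly b \<and> D arr_gamma = kQ_of_poly h * arr_gamma
   \<longleftrightarrow> D = kQ_der a b h"
  using kQ_derivation_eq_kQ_der kQ_derivation_kQ_der kQ_normalized_kQ_der kQ_der_arrows by blast

lemma kQ_peirce_components:
  "e1 * x * e2 = arr_alpha * kQ_of_poly (kQ_q x)"
  "e2 * x * e2 = kQ_of_poly (kQ_p x)"
  "e2 * x * e3 = kQ_of_poly (kQ_r x) * arr_gamma"
  by (cases x; simp add: kQ_simps)+

lemma kQ_derivation_arrows_exist:
  assumes D: "kQ_derivation D" and N: "kQ_normalized D"
  shows "\<exists>a b h. D arr_alpha = arr_alpha * kQ_of_poly a \<and> D arr_beta = kQ_of_poly b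
                 \<and> D arr_gamma = kQ_of_poly h * arr_gamma"
proof -
  have sandwich: "D (e * y * e') = e * D y * e'" if "D e = 0" "D e' = 0" for e e' y
    using that by (simp add: kQ_derivationD(3)[OF D]) (simp add: kQ_simps)
  have "D arr_alpha = e1 * D arr_alpha * e2"
    using sandwich[of e1 e2 arr_alpha] N by (simp add: kQ_normalized_def kQ_relations)
  moreover have "D arr_beta = e2 * D arr_beta * e2"
    using sandwich[of e2 e2 arr_beta] N by (simp add: kQ_normalized_def kQ_relations)
  moreover have "D arr_gamma = e2 * D arr_gamma * e3"
    using sandwich[of e2 e3 arr_gamma] N by (simp add: kQ_normalized_def kQ_relations)
  ultimately show ?thesis
    by (metis kQ_peirce_components)
qed

definition ideal_I_explicit :: "nat \<Rightarrow> nat \<Rightarrow> nat \<Rightarrow> 'k::comm_ring_1 poly set \<Rightarrow> 'k kQ set" where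
  "ideal_I_explicit n n' n'' V = {x. kQ_c1 x = 0 \<and> kQ_c3 x = 0 \<and> monom 1 n dvd kQ_p x \<and>
     monom 1 n' dvd kQ_q x \<and> monom 1 n'' dvd kQ_r x \<and> kQ_s x \<in> V}"

lemma ideal_I_explicitE:
  assumes "x \<in> ideal_I_explicit n n' n'' V"
  obtains p q r s where "x = KQ 0 0 (monom 1 n * p) (monom 1 n' * q) (monom 1 n'' * r) s"
    and "s \<in> V"
  using assms by (cases x) (auto simp: ideal_I_explicit_def elim!: dvdE)

lemma ideal_I_explicit_mult_left:
  fixes V :: "'k::comm_ring_1 poly set"
  assumes "n' \<le> n" and V: "poly_subspace V" and M: "\<forall>p. monom 1 (min n' n'') * p \<in> V"
    and x: "x \<in> ideal_I_explicit n n' n'' V"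
  shows "u * x \<in> ideal_I_explicit n n' n'' V"
proof -
  obtain p q r s where x_eq: "x = KQ 0 0 p q r s" and p: "monom 1 n dvd p"
    and q: "monom 1 n' dvd q" and r: "monom 1 n'' dvd r" and s: "s \<in> V"
    using x by (cases x) (simp add: ideal_I_explicit_def)
  have "monom 1 n' dvd kQ_q u * p"
    using monom_1_dvd_of_le[OF p assms(1)] by (rule dvd_mult)
  then have "monom 1 n' dvd smult (kQ_c1 u) q + kQ_q u * p"
    using q by (simp add: dvd_add dvd_smult)
  moreover have "smult (kQ_c1 u) s + kQ_q u * r \<in> V"
    using V s monom_dvd_imp_mem[OF M dvd_mult[OF r]] by (simp add: poly_subspace_def)
  ultimately show ?thesis
    using p r by (simp add: x_eq ideal_I_explicit_def times_kQ_def)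
qed

lemma ideal_I_explicit_mult_right:
  fixes V :: "'k::comm_ring_1 poly set"
  assumes "n'' \<le> n" and V: "poly_subspace V" and M: "\<forall>p. monom 1 (min n' n'') * p \<in> V"
    and x: "x \<in> ideal_I_explicit n n' n'' V"
  shows "x * w \<in> ideal_I_explicit n n' n'' V"
proof -
  obtain p q r s where x_eq: "x = KQ 0 0 p q r s" and p: "monom 1 n dvd p"
    and q: "monom 1 n' dvd q" and r: "monom 1 n'' dvd r" and s: "s \<in> V"
    using x by (cases x) (simp add: ideal_I_explicit_def)
  have "monom 1 n'' dvd p * kQ_r w"
    using monom_1_dvd_of_le[OF p assms(1)] by (rule dvd_mult2)
  then have "monom 1 n'' dvd p * kQ_r w + smult (kQ_c3 w) r"
    using r by (simp add: dvd_add dvd_smult)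
  moreover have "q * kQ_r w + smult (kQ_c3 w) s \<in> V"
    using V s monom_dvd_imp_mem[OF M dvd_mult2[OF q]] by (simp add: poly_subspace_def)
  ultimately show ?thesis
    using p q by (simp add: x_eq ideal_I_explicit_def times_kQ_def dvd_mult2)
qed

lemma ideal_I_subset_explicit:
  fixes V :: "'k::comm_ring_1 poly set"
  assumes "n' \<le> n" "n'' \<le> n" and V: "poly_subspace V"
    and M: "\<forall>p. monom 1 (min n' n'') * p \<in> V"
  shows "ideal_I n n' n'' V \<subseteq> ideal_I_explicit n n' n'' V"
proof
  fix x assume "x \<in> ideal_I n n' n'' V"
  then show "x \<in> ideal_I_explicit n n' n'' V"
    unfolding ideal_I_def
  proof induction
    case gen_zero
    then show ?case using V by (simp add: ideal_I_explicit_def kQ_simps poly_subspace_def)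
  next
    case (gen_base s)
    then show ?case using V by (auto simp: ideal_I_explicit_def kQ_simps poly_subspace_def)
  next
    case (gen_add x y)
    then show ?case using V by (simp add: ideal_I_explicit_def plus_kQ_def poly_subspace_def)
  next
    case (gen_mult x u w)
    then show ?case
      using ideal_I_explicit_mult_left ideal_I_explicit_mult_right assms by blast
  qed
qed

lemma ideal_I_explicit_subset_ideal_I:
  fixes V :: "'k::comm_ring_1 poly set"
  shows "ideal_I_explicit n n' n'' V \<subseteq> ideal_I n n' n'' V"
proof
  fix x assume "x \<in> ideal_I_explicit n n' n'' V"
  then obtain p q r s where x: "x = KQ 0 0 (monom 1 n * p) (monom 1 n' * q) (monom 1 n'' * r) s"
    and s: "s \<in> V"
    by (rule ideal_I_explicitE)
  let ?I = "ideal_I n n' n'' V"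
  have "kQ_of_poly p * kQ_of_poly (monom 1 n) * 1 \<in> ?I"
    "1 * (arr_alpha * kQ_of_poly (monom 1 n')) * kQ_of_poly q \<in> ?I"
    "kQ_of_poly r * (kQ_of_poly (monom 1 n'') * arr_gamma) * 1 \<in> ?I"
    unfolding ideal_I_def by (intro kQ_ideal_gen.gen_mult kQ_ideal_gen.gen_base, simp)+
  moreover have "arr_alpha * kQ_of_poly s * arr_gamma \<in> ?I"
    unfolding ideal_I_def using s by (intro kQ_ideal_gen.gen_base) blast
  moreover have "x = kQ_of_poly p * kQ_of_poly (monom 1 n) * 1
      + 1 * (arr_alpha * kQ_of_poly (monom 1 n')) * kQ_of_poly q
      + kQ_of_poly r * (kQ_of_poly (monom 1 n'') * arr_gamma) * 1
      + arr_alpha * kQ_of_poly s * arr_gamma"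
    by (simp add: x kQ_simps algebra_simps)
  ultimately show "x \<in> ?I"
    unfolding ideal_I_def by (simp only:) (intro kQ_ideal_gen.gen_add)
qed

lemma ideal_I_eq_explicit:
  fixes V :: "'k::comm_ring_1 poly set"
  assumes "n' \<le> n" "n'' \<le> n" and "poly_subspace V"
    and "\<forall>p. monom 1 (min n' n'') * p \<in> V"
  shows "ideal_I n n' n'' V = ideal_I_explicit n n' n'' V"
  using ideal_I_subset_explicit[OF assms] ideal_I_explicit_subset_ideal_I by blast

lemma kQ_der_mem_ideal_I_explicit_iff:
  fixes V :: "'k::field poly set"
  shows "kQ_der a b h (KQ 0 0 (monom 1 n * p) (monom 1 n' * q) (monom 1 n'' * r) s)
      \<in> ideal_I_explicit n n' n'' V \<longleftrightarrow>
    of_nat n * coeff b 0 * coeff p 0 = 0 \<and> of_nat n' * coeff b 0 * coeff q 0 = 0 \<and>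
    of_nat n'' * coeff b 0 * coeff r 0 = 0 \<and> Theta a b h s \<in> V"
proof -
  have "Theta a b h s = a * s + b * pderiv s + h * s"
    by (simp add: Theta_def algebra_simps)
  then show ?thesis
    by (simp add: ideal_I_explicit_def kQ_der_def mult.left_commute[of a]
        mult.left_commute[of _ "monom 1 n''"] dvd_add_right_iff dvd_add_left_iff
        monom_dvd_mult_pderiv_monom_mult_iff)
qed

lemma kQ_der_preserves_ideal_I_explicit_iff:
  fixes V :: "'k::field poly set"
  assumes "0 \<in> V"
  shows "kQ_der a b h ` ideal_I_explicit n n' n'' V \<subseteq> ideal_I_explicit n n' n'' V \<longleftrightarrow>
    of_nat (gcd n (gcd n' n'')) * coeff b 0 = 0 \<and> Theta a b h ` V \<subseteq> V"
proof
  assume stable: "kQ_der a b h ` ideal_I_explicit n n' n'' V \<subseteq> ideal_I_explicit n n' n'' V"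
  have "kQ_der a b h (KQ 0 0 (monom 1 n * p) (monom 1 n' * q) (monom 1 n'' * r) s)
      \<in> ideal_I_explicit n n' n'' V" if "s \<in> V" for p q r s
    using that by (intro subsetD[OF stable, OF imageI]) (simp add: ideal_I_explicit_def)
  then have "of_nat n * coeff b 0 * coeff p 0 = 0 \<and> of_nat n' * coeff b 0 * coeff q 0 = 0 \<and>
      of_nat n'' * coeff b 0 * coeff r 0 = 0 \<and> Theta a b h s \<in> V" if "s \<in> V" for p q r s
    using that unfolding kQ_der_mem_ideal_I_explicit_iff by blast
  from this[where p = 1 and q = 1 and r = 1 and s = 0] this[where p = 0 and q = 0 and r = 0]
  show "of_nat (gcd n (gcd n' n'')) * coeff b 0 = 0 \<and> Theta a b h ` V \<subseteq> V"
    using assms by (auto simp: of_nat_gcd_eq_0_iff)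
next
  assume H: "of_nat (gcd n (gcd n' n'')) * coeff b 0 = 0 \<and> Theta a b h ` V \<subseteq> V"
  show "kQ_der a b h ` ideal_I_explicit n n' n'' V \<subseteq> ideal_I_explicit n n' n'' V"
  proof clarify
    fix x assume "x \<in> ideal_I_explicit n n' n'' V"
    then obtain p q r s where "x = KQ 0 0 (monom 1 n * p) (monom 1 n' * q) (monom 1 n'' * r) s"
      and "s \<in> V"
      by (rule ideal_I_explicitE)
    then show "kQ_der a b h x \<in> ideal_I_explicit n n' n'' V"
      using H by (auto simp: kQ_der_mem_ideal_I_explicit_iff of_nat_gcd_eq_0_iff)
  qed
qed

lemma kQ_der_minus_commutator:
  "kQ_der a b h x - (KQ c 0 P 0 0 0 * x - x * KQ c 0 P 0 0 0)
    = kQ_der (a + P - [:c:]) b (h - P) x"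
  by (cases x) (simp add: kQ_der_def kQ_simps algebra_simps)

lemma kQ_der_mem_ideal_I_explicit:
  fixes V :: "'k::idom poly set"
  assumes "n' \<le> n" "n'' \<le> n" and M: "\<forall>p. monom 1 (min n' n'') * p \<in> V"
    and a: "monom 1 n' dvd a" and h: "monom 1 n'' dvd h" and b: "monom 1 n dvd b"
  shows "kQ_der a b h x \<in> ideal_I_explicit n n' n'' V"
proof -
  have "monom 1 n' dvd b" "monom 1 n'' dvd b"
    using b assms(1,2) by (auto intro: monom_1_dvd_of_le)
  moreover have "monom 1 (min n' n'') dvd a * kQ_s x + b * pderiv (kQ_s x) + h * kQ_s x"
    using a h b assms(1,2) by (intro dvd_add dvd_mult2; auto intro: monom_1_dvd_of_le)
  with M have "a * kQ_s x + b * pderiv (kQ_s x) + h * kQ_s x \<in> V"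
    by (auto elim: dvdE)
  ultimately show ?thesis
    using a b h by (simp add: ideal_I_explicit_def kQ_der_def dvd_add dvd_mult2)
qed

lemma kQ_der_inner_modulo_ideal_I_explicit_iff:
  fixes V :: "'k::idom poly set"
  assumes "1 \<le> n'" "1 \<le> n''" "n' \<le> n" "n'' \<le> n"
    and M: "\<forall>p. monom 1 (min n' n'') * p \<in> V"
  shows "(\<exists>u. \<forall>x. kQ_der a b h x - (u * x - x * u) \<in> ideal_I_explicit n n' n'' V) \<longleftrightarrow>
    monom 1 (min n' n'') dvd a + h - [:coeff a 0 + coeff h 0:] \<and> monom 1 n dvd b"
proof
  assume "\<exists>u. \<forall>x. kQ_der a b h x - (u * x - x * u) \<in> ideal_I_explicit n n' n'' V"
  then obtain d1 d3 P Q R S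
    where U: "\<And>x. kQ_der a b h x - (KQ d1 d3 P Q R S * x - x * KQ d1 d3 P Q R S)
      \<in> ideal_I_explicit n n' n'' V"
    by (metis kQ.exhaust)
  have alpha: "monom 1 n' dvd a + P - [:d1:]"
    using U[of arr_alpha] by (simp add: ideal_I_explicit_def kQ_der_def kQ_simps algebra_simps)
  have gamma: "monom 1 n'' dvd h - P + [:d3:]"
    using U[of arr_gamma] by (simp add: ideal_I_explicit_def kQ_der_def kQ_simps algebra_simps)
  have "monom 1 (min n' n'') dvd (a + P - [:d1:]) + (h - P + [:d3:])"
    by (rule dvd_add[OF monom_1_dvd_of_le[OF alpha] monom_1_dvd_of_le[OF gamma]]) simp_all
  also have "(a + P - [:d1:]) + (h - P + [:d3:]) = a + h - [:d1 - d3:]"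
    by (simp add: diff_pCons)
  finally have dvd: "monom 1 (min n' n'') dvd a + h - [:d1 - d3:]" .
  then have "coeff (a + h - [:d1 - d3:]) 0 = 0"
    using assms(1,2) by (simp add: monom_1_dvd_iff')
  then have "d1 - d3 = coeff a 0 + coeff h 0"
    by simp
  moreover have "monom 1 n dvd b"
    using U[of arr_beta] by (simp add: ideal_I_explicit_def kQ_der_def kQ_simps pderiv_pCons)
  ultimately show "monom 1 (min n' n'') dvd a + h - [:coeff a 0 + coeff h 0:] \<and> monom 1 n dvd b"
    using dvd by simp
next
  assume H: "monom 1 (min n' n'') dvd a + h - [:coeff a 0 + coeff h 0:] \<and> monom 1 n dvd b"
  define c where "c = coeff a 0 + coeff h 0"
  \<comment> \<open>u = c e1 + P moves all of a + h - c into the arrow with the smaller exponent\<close>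
  define P where "P = (if n' \<le> n'' then h else [:c:] - a)"
  have "monom 1 n' dvd a + P - [:c:]" "monom 1 n'' dvd h - P"
    using H by (auto simp: P_def c_def min_def algebra_simps)
  then have "kQ_der (a + P - [:c:]) b (h - P) x \<in> ideal_I_explicit n n' n'' V" for x
    using H assms(3,4) M by (intro kQ_der_mem_ideal_I_explicit) auto
  then show "\<exists>u. \<forall>x. kQ_der a b h x - (u * x - x * u) \<in> ideal_I_explicit n n' n'' V"
    by (metis kQ_der_minus_commutator)
qed

theorem mainTheorem5:
  fixes n n' n'' :: nat and V :: "'k::field poly set"
  assumes "n \<ge> 2" and "1 \<le> n'" and "n' \<le> n" and "1 \<le> n''" and "n'' \<le> n"
    and "poly_subspace V"
    and "\<forall>p. monom 1 (min n' n'') * p \<in> V"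
  shows
   "(\<forall>D :: 'k kQ \<Rightarrow> 'k kQ. kQ_derivation D \<and> kQ_normalized D \<longrightarrow>
        (\<exists>a b h. D arr_alpha = arr_alpha * kQ_of_poly a \<and> D arr_beta = kQ_of_poly b
                 \<and> D arr_gamma = kQ_of_poly h * arr_gamma))
    \<and> (\<forall>a b h. \<exists>!D :: 'k kQ \<Rightarrow> 'k kQ. kQ_derivation D \<and> kQ_normalized D
           \<and> D arr_alpha = arr_alpha * kQ_of_poly a \<and> D arr_beta = kQ_of_poly b
           \<and> D arr_gamma = kQ_of_poly h * arr_gamma)
    \<and> (\<forall>(D :: 'k kQ \<Rightarrow> 'k kQ) a b h.
         kQ_derivation D \<and> kQ_normalized D
         \<and> D arr_alpha = arr_alpha * kQ_of_poly a \<and> D arr_beta = kQ_of_poly b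
         \<and> D arr_gamma = kQ_of_poly h * arr_gamma \<longrightarrow>
         ((D ` ideal_I n n' n'' V \<subseteq> ideal_I n n' n'' V \<longleftrightarrow>
            (of_nat (gcd n (gcd n' n'')) * coeff b 0 = 0 \<and> Theta a b h ` V \<subseteq> V))
          \<and> (D ` ideal_I n n' n'' V \<subseteq> ideal_I n n' n'' V \<longrightarrow>
             ((\<exists>u :: 'k kQ. \<forall>x. D x - (u * x - x * u) \<in> ideal_I n n' n'' V) \<longleftrightarrow>
              (monom 1 (min n' n'') dvd (a + h - [:coeff a 0 + coeff h 0:])
               \<and> monom 1 n dvd b)))))"
proof -
  have "0 \<in> V"
    using assms(6) by (simp add: poly_subspace_def)
  moreover have "ideal_I n n' n'' V = ideal_I_explicit n n' n'' V"
    using ideal_I_eq_explicit assms by blast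
  ultimately show ?thesis
    unfolding kQ_derivation_arrows_iff
    using kQ_der_preserves_ideal_I_explicit_iff[of V]
      kQ_der_inner_modulo_ideal_I_explicit_iff[OF assms(2,4,3,5,7)]
    by simp (blast dest: kQ_derivation_arrows_exist)
qed

end
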